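(* Let $A\subsetneq\mathbb{R}^n$ be an affine subspace defined by linear equations with integer coefficients, and let $A_{\ge}$ be a closed half-space in $A$ defined by a non-strict linear inequality with integer coefficients. Then $A_{\ge}$ is a tropical prevariety in $\mathbb{R}^n$.
   Context: A tropical polynomial $f$ in $n$ variables is a function $f(x)=\min\{L_1(x),\dots,L_m(x)\}$ on $\mathbb{R}^n$, where each $L_j(x)=\sum_{i=1}^n a_{ji}x_i+b_j$ has non-negative integer coefficients $a_{ji}$ and real constant term $b_j$. The tropical hypersurface $V(f)$ is the set of points where this piecewise-linear function is not smooth. A tropical prevariety is a set of the form $V(f_1)\cap\cdots\cap V(f_k)$ for finitely many tropical polynomials $f_1,\dots,f_k$. *)

theory Defs
  imports "HOL-Analysis.Analysis"
begin

text \<open>A tropical polynomial in n variables (n = CARD('n)) is a finite nonempty set of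
  terms (a, b), with exponent vector a of non-negative integers and real constant b;
  it denotes the function x \<mapsto> min over its terms of a \<bullet> x + b.\<close>

definition tropical_polynomial :: "((nat^'n) \<times> real) set \<Rightarrow> bool" where
  "tropical_polynomial f \<longleftrightarrow> finite f \<and> f \<noteq> {}"

definition trop_eval :: "((nat^'n) \<times> real) set \<Rightarrow> real^'n \<Rightarrow> real" where
  "trop_eval f x = Min ((\<lambda>(a, b). (\<Sum>i\<in>UNIV. real (a $ i) * x $ i) + b) ` f)"

definition trop_hypersurface :: "((nat^'n) \<times> real) set \<Rightarrow> (real^'n) set" where
  "trop_hypersurface f = {x. \<not> (trop_eval f differentiable (at x))}"

definition tropical_prevariety :: "(real^'n) set \<Rightarrow> bool" where
  "tropical_prevariety S \<longleftrightarrow>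
     (\<exists>F. finite F \<and> (\<forall>f\<in>F. tropical_polynomial f) \<and> S = (\<Inter>f\<in>F. trop_hypersurface f))"

definition int_lin :: "int^'n \<Rightarrow> real^'n \<Rightarrow> real" where
  "int_lin a x = (\<Sum>i\<in>UNIV. real_of_int (a $ i) * x $ i)"

end

theory Submission
  imports Defs
begin

text \<open>A tropical polynomial is smooth exactly where its minimum is attained by a single term,
  so its hypersurface is the locus where the minimum is attained twice. Splitting an integer
  vector \<open>a\<close> into its positive and negative parts \<open>a\<^sup>+ - a\<^sup>-\<close>, the binomial
  \<open>min(a\<^sup>+ x, a\<^sup>- x + c)\<close> cuts out the hyperplane \<open>a x = c\<close>. On that hyperplane the
  trinomial \<open>min(a\<^sup>+ x + b\<^sup>- x, a\<^sup>- x + b\<^sup>- x + c, a\<^sup>+ x + b\<^sup>+ x - d)\<close> has two equal terms,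
  and the third lies above them exactly when \<open>b x \<ge> d\<close>. Intersecting the hypersurfaces of
  the binomials of all nonzero defining equations with that of one trinomial gives the
  half-space.\<close>

definition nat_lin :: "nat^'n \<Rightarrow> real^'n \<Rightarrow> real" where
  "nat_lin a x = (\<Sum>i\<in>UNIV. real (a $ i) * x $ i)"

definition trop_term :: "(nat^'n) \<times> real \<Rightarrow> real^'n \<Rightarrow> real" where
  "trop_term p x = nat_lin (fst p) x + snd p"

lemma bounded_linear_nat_lin: "bounded_linear (nat_lin a)"
  unfolding nat_lin_def by (intro bounded_linear_intros bounded_linear_vec_nth)

lemma has_derivative_trop_term: "(trop_term (a, c) has_derivative nat_lin a) F"
  unfolding trop_term_def
  by (auto intro!: derivative_eq_intros bounded_linear_imp_has_derivative bounded_linear_nat_lin)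

lemma nat_lin_add: "nat_lin (u + v) x = nat_lin u x + nat_lin v x"
  unfolding nat_lin_def by (simp add: distrib_right sum.distrib)

lemma nat_lin_inject:
  assumes "nat_lin a = nat_lin a'"
  shows "a = a'"
  unfolding vec_eq_iff
proof
  fix i
  have "nat_lin a (axis i 1) = nat_lin a' (axis i 1)" using assms by simp
  then show "a $ i = a' $ i"
    by (simp add: nat_lin_def axis_def if_distrib cong: if_cong)
qed

lemma trop_eval_eq_Min: "trop_eval f x = Min ((\<lambda>p. trop_term p x) ` f)"
  unfolding trop_eval_def trop_term_def nat_lin_def by (simp add: case_prod_unfold)

lemma trop_eval_le: "finite f \<Longrightarrow> p \<in> f \<Longrightarrow> trop_eval f x \<le> trop_term p x"
  unfolding trop_eval_eq_Min by (rule Min_le) auto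

lemma trop_eval_eqI:
  "finite f \<Longrightarrow> p \<in> f \<Longrightarrow> (\<And>q. q \<in> f \<Longrightarrow> trop_term p x \<le> trop_term q x)
    \<Longrightarrow> trop_eval f x = trop_term p x"
  unfolding trop_eval_eq_Min by (intro antisym Min_le Min.boundedI) auto

lemma trop_eval_attained:
  assumes "finite f" "f \<noteq> {}"
  obtains p where "p \<in> f" "trop_eval f x = trop_term p x"
proof -
  have "trop_eval f x \<in> (\<lambda>p. trop_term p x) ` f"
    unfolding trop_eval_eq_Min using assms by (intro Min_in) auto
  then show ?thesis using that by blast
qed

text \<open>Where the term \<open>(a, c)\<close> attains the minimum, \<open>trop_eval f - trop_term (a, c)\<close> has a
  global maximum, so its derivative vanishes.\<close>
lemma trop_eval_derivative_eq:
  assumes "finite f" "(a, c) \<in> f" "trop_eval f x = trop_term (a, c) x"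
    and D: "(trop_eval f has_derivative D) (at x)"
  shows "D = nat_lin a"
proof -
  let ?g = "\<lambda>y. trop_eval f y - trop_term (a, c) y"
  have "(?g has_derivative (\<lambda>y. D y - nat_lin a y)) (at x)"
    by (rule has_derivative_diff[OF D has_derivative_trop_term])
  moreover have "?g y \<le> ?g x" for y
    using trop_eval_le[OF assms(1,2), of y] assms(3) by linarith
  ultimately have "(\<lambda>y. D y - nat_lin a y) = (\<lambda>y. 0)"
    by (intro differential_zero_maxmin[where S = UNIV and x = x]) auto
  then show ?thesis by (simp add: fun_eq_iff)
qed

lemma trop_eval_not_differentiable:
  assumes "finite f" "p \<in> f" "q \<in> f" "p \<noteq> q"
    and "trop_eval f x = trop_term p x" "trop_eval f x = trop_term q x"
  shows "\<not> trop_eval f differentiable (at x)"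
proof
  assume "trop_eval f differentiable (at x)"
  then obtain D where D: "(trop_eval f has_derivative D) (at x)"
    unfolding differentiable_def by blast
  have "nat_lin (fst p) = nat_lin (fst q)"
    using trop_eval_derivative_eq[OF assms(1) _ _ D, of "fst p" "snd p"]
      trop_eval_derivative_eq[OF assms(1) _ _ D, of "fst q" "snd q"] assms(2,3,5,6) by simp
  then have "fst p = fst q" by (rule nat_lin_inject)
  moreover from this have "snd p = snd q"
    using assms(5,6) by (simp add: trop_term_def)
  ultimately show False using assms(4) by (simp add: prod_eq_iff)
qed

lemma trop_eval_differentiable:
  assumes "finite f" "p \<in> f" "\<And>q. q \<in> f \<Longrightarrow> q \<noteq> p \<Longrightarrow> trop_term p x < trop_term q x"
  shows "trop_eval f differentiable (at x)"
proof -
  define U where "U = (\<Inter>q\<in>f - {p}. {y. trop_term p y < trop_term q y})"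
  have cont: "continuous_on UNIV (trop_term q)" for q :: "(nat^'n) \<times> real"
    using has_derivative_trop_term[of "fst q" "snd q"]
    by (intro differentiable_imp_continuous_on) (auto simp: differentiable_on_def differentiable_def)
  then have "open U"
    unfolding U_def using assms(1) by (intro open_INT ballI open_Collect_less cont) auto
  moreover have "x \<in> U" using assms(3) by (auto simp: U_def)
  moreover have "trop_term p y = trop_eval f y" if "y \<in> U" for y
  proof (rule trop_eval_eqI[symmetric, OF assms(1,2)])
    fix q assume "q \<in> f"
    with that show "trop_term p y \<le> trop_term q y"
      by (cases "q = p") (auto simp: U_def less_imp_le)
  qed
  ultimately show ?thesis
    using has_derivative_transform_within_open[OF has_derivative_trop_term]
    by (metis differentiable_def prod.collapse)
qed

lemma trop_hypersurface_iff:
  assumes "tropical_polynomial f"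
  shows "x \<in> trop_hypersurface f \<longleftrightarrow>
    (\<exists>p\<in>f. \<exists>q\<in>f. p \<noteq> q \<and> trop_term p x = trop_term q x \<and> (\<forall>r\<in>f. trop_term p x \<le> trop_term r x))"
    (is "_ \<longleftrightarrow> ?tie")
proof
  have fin: "finite f" "f \<noteq> {}" using assms by (auto simp: tropical_polynomial_def)
  obtain p where p: "p \<in> f" "trop_eval f x = trop_term p x"
    using trop_eval_attained[OF fin] .
  have p_min: "trop_term p x \<le> trop_term r x" if "r \<in> f" for r
    using trop_eval_le[OF fin(1) that, of x] p(2) by simp
  show ?tie if "x \<in> trop_hypersurface f"
  proof (rule ccontr)
    assume "\<not> ?tie"
    then have "trop_term p x < trop_term q x" if "q \<in> f" "q \<noteq> p" for q
      using p(1) p_min that by (metis order_le_neq_trans)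
    then have "trop_eval f differentiable (at x)"
      by (rule trop_eval_differentiable[OF fin(1) p(1)])
    with \<open>x \<in> trop_hypersurface f\<close> show False by (simp add: trop_hypersurface_def)
  qed
  show "x \<in> trop_hypersurface f" if ?tie
  proof -
    from that obtain q r where "q \<in> f" "r \<in> f" "q \<noteq> r" "trop_term q x = trop_term r x"
      "\<forall>s\<in>f. trop_term q x \<le> trop_term s x" by blast
    then show ?thesis
      using trop_eval_eqI[OF fin(1), of q x] trop_eval_not_differentiable[OF fin(1), of q r x]
      by (simp add: trop_hypersurface_def)
  qed
qed

lemma trop_hypersurface_binomial:
  assumes "p \<noteq> q"
  shows "trop_hypersurface {p, q} = {x. trop_term p x = trop_term q x}"
proof -
  have "tropical_polynomial {p, q}" by (simp add: tropical_polynomial_def)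
  then show ?thesis
    using assms by (auto simp: trop_hypersurface_iff)
qed

definition pos_part_vec :: "int^'n \<Rightarrow> nat^'n" where
  "pos_part_vec a = (\<chi> i. nat (a $ i))"

definition neg_part_vec :: "int^'n \<Rightarrow> nat^'n" where
  "neg_part_vec a = (\<chi> i. nat (- a $ i))"

lemma int_lin_eq_pos_neg:
  "int_lin a x = nat_lin (pos_part_vec a) x - nat_lin (neg_part_vec a) x"
proof -
  have "real_of_int (a $ i) * x $ i
      = real (nat (a $ i)) * x $ i - real (nat (- a $ i)) * x $ i" for i
    by (cases "a $ i \<ge> 0") (auto simp: left_diff_distrib[symmetric])
  then show ?thesis
    unfolding int_lin_def nat_lin_def pos_part_vec_def neg_part_vec_def
    by (simp add: sum_subtractf[symmetric])
qed

lemma pos_part_neq_neg_part_vec: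
  assumes "a \<noteq> 0"
  shows "pos_part_vec a \<noteq> neg_part_vec a"
proof -
  obtain i where "a $ i \<noteq> 0" using assms by (auto simp: vec_eq_iff)
  then have "nat (a $ i) \<noteq> nat (- a $ i)" by linarith
  then show ?thesis by (auto simp: pos_part_vec_def neg_part_vec_def vec_eq_iff)
qed

definition hyperplane_poly :: "int^'n \<Rightarrow> real \<Rightarrow> ((nat^'n) \<times> real) set" where
  "hyperplane_poly a c = {(pos_part_vec a, 0), (neg_part_vec a, c)}"

definition halfspace_poly :: "int^'n \<Rightarrow> real \<Rightarrow> int^'n \<Rightarrow> real \<Rightarrow> ((nat^'n) \<times> real) set" where
  "halfspace_poly a c b d =
    {(pos_part_vec a + neg_part_vec b, 0), (neg_part_vec a + neg_part_vec b, c),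
     (pos_part_vec a + pos_part_vec b, - d)}"

lemma trop_hypersurface_hyperplane_poly:
  assumes "a \<noteq> 0"
  shows "trop_hypersurface (hyperplane_poly a c) = {x. int_lin a x = c}"
  using pos_part_neq_neg_part_vec[OF assms]
  by (auto simp: hyperplane_poly_def trop_hypersurface_binomial trop_term_def int_lin_eq_pos_neg)

lemma trop_hypersurface_halfspace_poly:
  assumes "a \<noteq> 0" "int_lin a x = c"
  shows "x \<in> trop_hypersurface (halfspace_poly a c b d) \<longleftrightarrow> int_lin b x \<ge> d"
proof -
  let ?p = "(pos_part_vec a + neg_part_vec b, 0)"
  let ?q = "(neg_part_vec a + neg_part_vec b, c)"
  let ?r = "(pos_part_vec a + pos_part_vec b, - d)"
  have poly: "tropical_polynomial (halfspace_poly a c b d)"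
    by (simp add: tropical_polynomial_def halfspace_poly_def)
  have "?p \<noteq> ?q" using pos_part_neq_neg_part_vec[OF assms(1)] by (auto simp: vec_eq_iff)
  moreover have "trop_term ?q x = trop_term ?p x"
    using assms(2) by (simp add: trop_term_def nat_lin_add int_lin_eq_pos_neg)
  moreover have "trop_term ?r x = trop_term ?p x + int_lin b x - d"
    by (simp add: trop_term_def nat_lin_add int_lin_eq_pos_neg)
  ultimately show ?thesis
    unfolding trop_hypersurface_iff[OF poly] by (auto simp: halfspace_poly_def)
qed

lemma solutions_drop_zero_equations:
  assumes "{x. \<forall>(a, c)\<in>E. int_lin a x = c} \<noteq> {}"
  shows "{x. \<forall>(a, c)\<in>E. int_lin a x = c} = {x. \<forall>(a, c)\<in>{(a, c)\<in>E. a \<noteq> 0}. int_lin a x = c}"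
proof -
  have zero: "int_lin 0 x = 0" for x :: "real^'n" by (simp add: int_lin_def)
  from assms obtain x0 where "\<forall>(a, c)\<in>E. int_lin a x0 = c" by blast
  then have "c = 0" if "(0, c) \<in> E" for c using that zero by fastforce
  then show ?thesis using zero by fastforce
qed

lemma Inter_trop_hypersurface_hyperplane_poly:
  assumes "\<forall>(a, c)\<in>E. a \<noteq> 0"
  shows "(\<Inter>(a, c)\<in>E. trop_hypersurface (hyperplane_poly a c)) = {x. \<forall>(a, c)\<in>E. int_lin a x = c}"
proof -
  have "trop_hypersurface (hyperplane_poly a c) = {x. int_lin a x = c}" if "(a, c) \<in> E" for a c
    using that assms trop_hypersurface_hyperplane_poly[of a c] by auto
  then show ?thesis by auto
qed

theorem lemma1p1:
  fixes E :: "((int^'n) \<times> real) set"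
    and A :: "(real^'n) set"
    and b :: "int^'n" and d :: real
  assumes "finite E"
    and A_def: "A = {x. \<forall>(a, c)\<in>E. int_lin a x = c}"
    and "A \<noteq> UNIV"
    and "A \<noteq> {}"
    and "\<exists>x\<in>A. \<exists>y\<in>A. int_lin b x \<noteq> int_lin b y"
  shows "tropical_prevariety {x\<in>A. int_lin b x \<ge> d}"
proof -
  define E' where "E' = {(a, c)\<in>E. a \<noteq> 0}"
  have A_E': "A = {x. \<forall>(a, c)\<in>E'. int_lin a x = c}"
    unfolding A_def E'_def by (rule solutions_drop_zero_equations) (use assms(4) A_def in simp)
  then obtain a0 c0 where ac0: "(a0, c0) \<in> E'" using assms(3) by auto
  then have "a0 \<noteq> 0" by (simp add: E'_def)
  define F where "F = insert (halfspace_poly a0 c0 b d) ((\<lambda>(a, c). hyperplane_poly a c) ` E')"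
  have hyperplanes: "(\<Inter>(a, c)\<in>E'. trop_hypersurface (hyperplane_poly a c)) = A"
    unfolding A_E' by (rule Inter_trop_hypersurface_hyperplane_poly) (simp add: E'_def)
  have "(\<Inter>f\<in>F. trop_hypersurface f) = trop_hypersurface (halfspace_poly a0 c0 b d) \<inter> A"
    using hyperplanes by (simp add: F_def image_image case_prod_unfold)
  also have "\<dots> = {x\<in>A. int_lin b x \<ge> d}"
    using trop_hypersurface_halfspace_poly[OF \<open>a0 \<noteq> 0\<close>] ac0 A_E' by auto
  finally have "(\<Inter>f\<in>F. trop_hypersurface f) = {x\<in>A. int_lin b x \<ge> d}" .
  moreover have "finite F"
    using finite_subset[OF _ assms(1), of E'] by (auto simp: F_def E'_def)
  moreover have "\<forall>f\<in>F. tropical_polynomial f"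
    by (auto simp: F_def tropical_polynomial_def hyperplane_poly_def halfspace_poly_def)
  ultimately show ?thesis unfolding tropical_prevariety_def by (metis (no_types))
qed

end
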